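(* It holds that $L_{BA}=\begin{pmatrix} 1/w_{BA} & v_{BA}/w_{BA} \\ v_{BA}/w_{BA} & 1/w_{BA} \end{pmatrix}$.
   Context: The model is a discrete one-dimensional environment populated by stateless automata ("elementary bodies"); each time step an elementary body either moves one coordinate unit in its direction or reverses direction. A body is a finite set of elementary bodies; an inertial body is one with constant spatial velocity and constant proper time velocity. For inertial bodies $A,B$, $O_B$ is the reference frame associated with $B$ (events written as column vectors $\begin{pmatrix} x\\ \tau_B\end{pmatrix}$ of space coordinate and proper time of $B$), in which $B$ has coordinate $x_{BB}\equiv 0$ and proper time velocity $1$. $v_{BA}$ and $w_{BA}$ denote the (constant) spatial velocity and proper time velocity of $B$ in the reference frame $O_A$, so that $x_{BA}(\tau_A)=v_{BA}\tau_A$ and $\tau_{BA}(\tau_A)=w_{BA}\tau_A$ when origins coincide. $L_{BA}:O_B\to O_A$ is the map sending coordinates of an event in $O_B$ to its coordinates in $O_A$; coordinates in different inertial frames are related affinely, the origins of $O_A$ and $O_B$ are assumed to coincide, so $L_{BA}$ is linear with matrix $\begin{pmatrix} a_{11} & a_{12} \\ a_{21} & a_{22} \end{pmatrix}$. Since $\begin{pmatrix} 1\\1\end{pmatrix}$ and $\begin{pmatrix} -1\\1\end{pmatrix}$ are eigenvectors of $L_{BA}$ (standard configuration), $a_{11}=a_{22}$ and $a_{12}=a_{21}$. *)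

theory Defs
  imports "HOL-Analysis.Analysis"
begin

text \<open>Events in a reference frame are column vectors (x, tau) in real^2;
  component 1 is the space coordinate, component 2 the proper time.\<close>
definition vec2 :: "real \<Rightarrow> real \<Rightarrow> real^2" where
  "vec2 x t = vector [x, t]"

definition mat2 :: "real \<Rightarrow> real \<Rightarrow> real \<Rightarrow> real \<Rightarrow> real^2^2" where
  "mat2 a11 a12 a21 a22 = vector [vector [a11, a12], vector [a21, a22]]"

end

theory Submission
  imports Defs
begin

text \<open>Reading off the worldline of \<open>B\<close> at \<open>\<tau>\<^sub>A = 1\<close> gives the second column of \<open>L\<^sub>B\<^sub>A\<close>
  as \<open>(v/w, 1/w)\<close>; the eigenvectors \<open>(1,1)\<close> and \<open>(-1,1)\<close> force \<open>a\<^sub>1\<^sub>1 = a\<^sub>2\<^sub>2\<close> and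
  \<open>a\<^sub>1\<^sub>2 = a\<^sub>2\<^sub>1\<close>, which determines the first column.\<close>

lemma vec2_nth [simp]: "vec2 x t $ 1 = x" "vec2 x t $ 2 = t"
  by (simp_all add: vec2_def)

lemma matrix_vector_mult_vec2_nth [simp]:
  "(M *v vec2 x t) $ 1 = M$1$1 * x + M$1$2 * t"
  "(M *v vec2 x t) $ 2 = M$2$1 * x + M$2$2 * t"
  by (simp_all add: vec2_def matrix_vector_mult_def sum_2 vector_def)

lemma eq_mat2_iff:
  "M = mat2 a b c d \<longleftrightarrow> M$1$1 = a \<and> M$1$2 = b \<and> M$2$1 = c \<and> M$2$2 = d"
  by (auto simp: mat2_def vec_eq_iff forall_2)

lemma lightlike_eigenvectors_imp_boost_shape:
  fixes M :: "real^2^2"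
  assumes "M *v vec2 1 1 = c *s vec2 1 1"
    and "M *v vec2 (-1) 1 = d *s vec2 (-1) 1"
  shows "M$1$1 = M$2$2" and "M$1$2 = M$2$1"
proof -
  have "M$1$1 + M$1$2 = c" "M$2$1 + M$2$2 = c"
    using assms(1) by (simp_all add: vec_eq_iff forall_2)
  moreover have "- M$1$1 + M$1$2 = - d" "- M$2$1 + M$2$2 = d"
    using assms(2) by (simp_all add: vec_eq_iff forall_2)
  ultimately show "M$1$1 = M$2$2" and "M$1$2 = M$2$1"
    by linarith+
qed

theorem theorem2:
  fixes L_BA :: "real^2^2" and v_BA w_BA :: real
  assumes w_pos: "w_BA > 0"
    and eig1: "\<exists>c. L_BA *v vec2 1 1 = c *s vec2 1 1"
    and eig2: "\<exists>d. L_BA *v vec2 (-1) 1 = d *s vec2 (-1) 1"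
    and worldline_B: "\<forall>tA. L_BA *v vec2 0 (w_BA * tA) = vec2 (v_BA * tA) tA"
  shows "L_BA = mat2 (1 / w_BA) (v_BA / w_BA) (v_BA / w_BA) (1 / w_BA)"
proof -
  obtain c d where "L_BA *v vec2 1 1 = c *s vec2 1 1"
    and "L_BA *v vec2 (-1) 1 = d *s vec2 (-1) 1"
    using eig1 eig2 by blast
  then have diag: "L_BA$1$1 = L_BA$2$2" and offdiag: "L_BA$1$2 = L_BA$2$1"
    by (rule lightlike_eigenvectors_imp_boost_shape)+
  have "L_BA *v vec2 0 w_BA = vec2 v_BA 1"
    using worldline_B[rule_format, of 1] by simp
  then have "L_BA$1$2 * w_BA = v_BA" and "L_BA$2$2 * w_BA = 1"
    by (simp_all add: vec_eq_iff forall_2)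
  then have "L_BA$1$2 = v_BA / w_BA" and "L_BA$2$2 = 1 / w_BA"
    using w_pos by (simp_all add: field_simps)
  then show ?thesis
    using diag offdiag by (simp add: eq_mat2_iff)
qed

end
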